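(* Let $n\ge 3$ and $v\in A_n$. Let $v=v_3\cdots v_n$ be the unique factorization with $v_i\in R_i$ for $3\le i\le n$, and set $\hat\ell(v)=\#\{i\mid v_i\neq e\}$. Then $\hat\ell(v)=\ell_{T(A_n)}(v)$.
   Context: $A_n$ is the alternating group on $\{1,\dots,n\}$, $e$ the identity, and products are compositions of permutations with the rightmost factor applied first; $A_i$ for $i\le n$ is the subgroup fixing $i+1,\dots,n$. $T(A_n)=\{(1\,2)(i\,j)\mid 1\le i<j\le n\}$, and for $v\in A_n$, $\ell_{T(A_n)}(v)=\min\{k\ge 0\mid v=t_1\cdots t_k,\ t_i\in T(A_n)\}$. For $3\le i\le n$, $R_i=\{(1\,2)(k\,i)\mid 1\le k<i\}\cup\{e\}$. Every $v\in A_n$ has a unique factorization $v=v_3\cdots v_n$ with $v_i\in R_i$. *)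

theory Defs
  imports "HOL-Combinatorics.Combinatorics"
begin

(* Permutations of {1..n} are functions nat => nat; the product u v is
   function composition u \<circ> v (rightmost factor applied first). *)

definition alt_group :: "nat \<Rightarrow> (nat \<Rightarrow> nat) set" where
  "alt_group n = {p. p permutes {1..n} \<and> evenperm p}"

definition T_gens :: "nat \<Rightarrow> (nat \<Rightarrow> nat) set" where
  "T_gens n = {transpose 1 2 \<circ> transpose i j | i j. 1 \<le> i \<and> i < j \<and> j \<le> n}"

definition list_prod :: "(nat \<Rightarrow> nat) list \<Rightarrow> (nat \<Rightarrow> nat)" where
  "list_prod ts = foldr (\<circ>) ts id"

definition T_length :: "nat \<Rightarrow> (nat \<Rightarrow> nat) \<Rightarrow> nat" where
  "T_length n v = (LEAST k. \<exists>ts. length ts = k \<and> set ts \<subseteq> T_gens n \<and> v = list_prod ts)"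

definition R_set :: "nat \<Rightarrow> (nat \<Rightarrow> nat) set" where
  "R_set i = {transpose 1 2 \<circ> transpose k i | k. 1 \<le> k \<and> k < i} \<union> {id}"

end

theory Submission
  imports Defs
begin

text \<open>
  Every nontrivial factor v_i = (1 2)(k i) is itself a generator, so the T-length is at most
  the number of nontrivial factors. Conversely, right multiplication by a generator t raises
  that number by at most one: conjugating by (1 2) and by transpositions gives v_n t = g r with
  r in R_n, where either g = e, or g is a generator of A_(n-1) and r = e whenever v_n = e; in the
  latter case one inducts on n. So a word of length k yields a factorization with at most k
  nontrivial factors, and uniqueness of the factorization gives equality.
\<close>

lemma list_prod_append: "list_prod (xs @ ys) = list_prod xs \<circ> list_prod ys"
  by (induction xs) (simp_all add: list_prod_def comp_assoc)

lemma list_prod_snoc: "list_prod (xs @ [x]) = list_prod xs \<circ> x"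
  using list_prod_append[of xs "[x]"] by (simp add: list_prod_def)

lemma bij_list_prod: "(\<And>t. t \<in> set ts \<Longrightarrow> bij t) \<Longrightarrow> bij (list_prod ts)"
  by (induction ts) (simp_all add: list_prod_def bij_comp)

lemma list_prod_fixpoint: "(\<And>t. t \<in> set ts \<Longrightarrow> t x = x) \<Longrightarrow> list_prod ts x = x"
  by (induction ts) (simp_all add: list_prod_def)

lemma list_prod_filter_id: "list_prod (filter (\<lambda>t. t \<noteq> id) ts) = list_prod ts"
  by (induction ts) (simp_all add: list_prod_def)

lemma transpose_conj:
  "transpose a b \<circ> transpose x y = transpose (transpose a b x) (transpose a b y) \<circ> transpose a b"
  using transpose_comp_eq[of "transpose a b" "transpose a b x" "transpose a b y"] by simp

lemma transpose_conj_cancel: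
  "transpose a b \<circ> transpose x y \<circ> (transpose a b \<circ> g) = transpose (transpose a b x) (transpose a b y) \<circ> g"
  by (simp only: transpose_conj[of a b x y] comp_assoc) (simp flip: comp_assoc)

lemma T_gens_ordered_memI:
  assumes "1 \<le> a" "a < b" "b \<le> n"
  shows "transpose 1 2 \<circ> transpose a b \<in> T_gens n"
  unfolding T_gens_def using assms by blast

lemma T_gensI:
  assumes "1 \<le> a" "a \<le> n" "1 \<le> b" "b \<le> n" "a \<noteq> b"
  shows "transpose 1 2 \<circ> transpose a b \<in> T_gens n"
  using assms T_gens_ordered_memI[of a b n] T_gens_ordered_memI[of b a n]
  by (cases "a < b") (simp_all add: transpose_commute)

lemma T_gens_below_3:
  assumes "n < 3" "t \<in> T_gens n"
  shows "t = id"
proof -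
  from assms(2) obtain i j where "t = transpose 1 2 \<circ> transpose i j" "1 \<le> i" "i < j" "j \<le> n"
    unfolding T_gens_def by blast
  moreover from this have "i = 1" "j = 2" using assms(1) by linarith+
  ultimately show ?thesis by simp
qed

lemma R_setI: "\<lbrakk>1 \<le> k; k < i\<rbrakk> \<Longrightarrow> transpose 1 2 \<circ> transpose k i \<in> R_set i"
  unfolding R_set_def by blast

lemma R_set_bij: "r \<in> R_set i \<Longrightarrow> bij r"
  unfolding R_set_def by (auto intro: bij_comp)

lemma R_set_fixpoint: "r \<in> R_set i \<Longrightarrow> i < x \<Longrightarrow> r x = x"
  unfolding R_set_def by (auto simp: transpose_def)

lemma R_set_determined_by_preimage:
  assumes "3 \<le> m" "r \<in> R_set m" "r x = m"
  shows "r = (if x = m then id else transpose 1 2 \<circ> transpose x m)"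
proof -
  from assms(2) consider "r = id" | k where "r = transpose 1 2 \<circ> transpose k m" "k < m"
    unfolding R_set_def by blast
  then show ?thesis
  proof cases
    case (2 k)
    then have "transpose k m x = m"
      using assms by (auto simp: transpose_def split: if_splits)
    then show ?thesis using 2 by (auto simp: transpose_def split: if_splits)
  qed (use assms in simp)
qed

lemma R_set_times_T_gens:
  assumes "3 \<le> m" and r: "r \<in> R_set m" and t: "t \<in> T_gens m"
  obtains "r \<circ> t \<in> R_set m"
  | g r' where "r \<circ> t = g \<circ> r'" "g \<in> T_gens (m - 1)" "r' \<in> R_set m" "r = id \<Longrightarrow> r' = id"
proof -
  let ?c = "transpose (1::nat) 2"
  from t obtain a b where ab: "t = ?c \<circ> transpose a b" "1 \<le> a" "a < b" "b \<le> m"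
    unfolding T_gens_def by blast
  have cm: "?c m = m" using \<open>3 \<le> m\<close> by simp
  from r consider "r = id" | k where "r = ?c \<circ> transpose k m" "1 \<le> k" "k < m"
    unfolding R_set_def by blast
  then show thesis
  proof cases
    case 1
    show thesis
    proof (cases "b = m")
      case True
      then show thesis using 1 ab by (intro that(1)) (auto simp: R_set_def)
    next
      case False
      then have "t \<in> T_gens (m - 1)" using ab T_gens_ordered_memI[of a b "m - 1"] by simp
      then show thesis using 1 by (intro that(2)[where r' = id]) (auto simp: R_set_def)
    qed
  next
    case (2 k)
    let ?y = "?c k"
    have y: "1 \<le> ?y" "?y < m" using 2 \<open>3 \<le> m\<close> by (auto simp: transpose_def)
    have "r m = ?y" using 2 cm by simp
    then have "r \<noteq> id" using y by auto
    have rt: "r \<circ> t = transpose ?y m \<circ> transpose a b"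
      using transpose_conj_cancel[of 1 2 k m] 2(1) ab(1) cm by simp
    consider "b = m" "?y = a" | "b = m" "?y \<noteq> a" | "b < m"
      using ab by linarith
    then show thesis
    proof cases
      case 1
      then show thesis using rt by (intro that(1)) (simp add: R_set_def)
    next
      case 2
      have "transpose ?y m \<circ> transpose a m = transpose a ?y \<circ> transpose ?y m"
        using transpose_conj[of ?y m a m] 2 y ab by simp
      also have "\<dots> = (?c \<circ> transpose (?c a) k) \<circ> (?c \<circ> transpose ?y m)"
        using transpose_conj_cancel[of 1 2 "?c a" k "transpose ?y m"] by (simp add: comp_assoc)
      finally have "r \<circ> t = (?c \<circ> transpose (?c a) k) \<circ> (?c \<circ> transpose ?y m)"
        using rt 2 by simp
      moreover have "?c \<circ> transpose (?c a) k \<in> T_gens (m - 1)"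
        using 2 ab y \<open>k < m\<close> \<open>1 \<le> k\<close> \<open>3 \<le> m\<close>
        by (intro T_gensI) (auto simp: transpose_def)
      moreover have "?c \<circ> transpose ?y m \<in> R_set m"
        using y by (rule R_setI)
      ultimately show thesis using \<open>r \<noteq> id\<close> that(2) by blast
    next
      case 3
      let ?z = "transpose a b ?y"
      have "transpose ?y m \<circ> transpose a b = transpose a b \<circ> transpose ?z m"
        using transpose_conj[of a b ?z m] 3 ab by simp
      also have "\<dots> = (?c \<circ> transpose (?c a) (?c b)) \<circ> (?c \<circ> transpose ?z m)"
        using transpose_conj_cancel[of 1 2 "?c a" "?c b" "transpose ?z m"] by (simp add: comp_assoc)
      finally have "r \<circ> t = (?c \<circ> transpose (?c a) (?c b)) \<circ> (?c \<circ> transpose ?z m)"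
        using rt by simp
      moreover have "?c \<circ> transpose (?c a) (?c b) \<in> T_gens (m - 1)"
        using 3 ab \<open>3 \<le> m\<close> by (intro T_gensI) (auto simp: transpose_def)
      moreover have "?c \<circ> transpose ?z m \<in> R_set m"
        using y 3 ab by (intro R_setI) (auto simp: transpose_def)
      ultimately show thesis using \<open>r \<noteq> id\<close> that(2) by blast
    qed
  qed
qed

definition R_factors :: "nat \<Rightarrow> (nat \<Rightarrow> nat \<Rightarrow> nat) \<Rightarrow> bool" where
  "R_factors n f \<longleftrightarrow> (\<forall>i. 3 \<le> i \<longrightarrow> i \<le> n \<longrightarrow> f i \<in> R_set i)"

abbreviation R_prod :: "nat \<Rightarrow> (nat \<Rightarrow> nat \<Rightarrow> nat) \<Rightarrow> nat \<Rightarrow> nat" where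
  "R_prod n f \<equiv> list_prod (map f [3..<n+1])"

definition hat_length :: "nat \<Rightarrow> (nat \<Rightarrow> nat \<Rightarrow> nat) \<Rightarrow> nat" where
  "hat_length n f = card {i \<in> {3..n}. f i \<noteq> id}"

lemma R_factors_Suc:
  "R_factors (Suc n) f \<longleftrightarrow> R_factors n f \<and> (3 \<le> Suc n \<longrightarrow> f (Suc n) \<in> R_set (Suc n))"
proof
  assume "R_factors (Suc n) f"
  then show "R_factors n f \<and> (3 \<le> Suc n \<longrightarrow> f (Suc n) \<in> R_set (Suc n))"
    unfolding R_factors_def by simp
qed (auto simp: R_factors_def le_Suc_eq)

lemma R_factors_upd: "R_factors n f \<Longrightarrow> r \<in> R_set (Suc n) \<Longrightarrow> R_factors (Suc n) (f(Suc n := r))"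
  unfolding R_factors_def by (auto simp: le_Suc_eq)

lemma R_prod_cong: "(\<And>i. 3 \<le> i \<Longrightarrow> i \<le> n \<Longrightarrow> f i = g i) \<Longrightarrow> R_prod n f = R_prod n g"
  by (intro arg_cong[where f = list_prod] map_cong) auto

lemma hat_length_cong: "(\<And>i. 3 \<le> i \<Longrightarrow> i \<le> n \<Longrightarrow> f i = g i) \<Longrightarrow> hat_length n f = hat_length n g"
  unfolding hat_length_def by (intro arg_cong[where f = card]) auto

lemma R_prod_Suc: "3 \<le> Suc n \<Longrightarrow> R_prod (Suc n) f = R_prod n f \<circ> f (Suc n)"
  by (simp add: list_prod_snoc)

lemma hat_length_Suc:
  assumes "3 \<le> Suc n"
  shows "hat_length (Suc n) f = hat_length n f + (if f (Suc n) = id then 0 else 1)"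
proof -
  have "{i \<in> {3..Suc n}. f i \<noteq> id} =
      {i \<in> {3..n}. f i \<noteq> id} \<union> (if f (Suc n) = id then {} else {Suc n})"
    using assms by (auto simp: le_Suc_eq)
  then show ?thesis unfolding hat_length_def by simp
qed

lemma R_prod_upd:
  assumes "3 \<le> Suc n"
  shows "R_prod (Suc n) (f(Suc n := r)) = R_prod n f \<circ> r"
proof -
  have "R_prod (Suc n) (f(Suc n := r)) = R_prod n (f(Suc n := r)) \<circ> (f(Suc n := r)) (Suc n)"
    by (rule R_prod_Suc[OF assms])
  also have "R_prod n (f(Suc n := r)) = R_prod n f"
    by (rule R_prod_cong) simp
  finally show ?thesis by (simp only: fun_upd_same)
qed

lemma hat_length_upd:
  "3 \<le> Suc n \<Longrightarrow> hat_length (Suc n) (f(Suc n := r)) = hat_length n f + (if r = id then 0 else 1)"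
  using hat_length_Suc hat_length_cong[of n "f(Suc n := r)" f] by simp

lemma R_prod_times_T_gens:
  assumes "R_factors n f" "t \<in> T_gens n"
  shows "\<exists>f'. R_factors n f' \<and> R_prod n f \<circ> t = R_prod n f' \<and> hat_length n f' \<le> hat_length n f + 1"
  using assms
proof (induction n arbitrary: f t)
  case 0
  then show ?case by (simp add: T_gens_def)
next
  case (Suc n)
  show ?case
  proof (cases "3 \<le> Suc n")
    case False
    then have "t = id" by (intro T_gens_below_3[OF _ Suc.prems(2)]) simp
    then show ?thesis using Suc.prems(1) by auto
  next
    case m: True
    let ?r = "f (Suc n)"
    have f: "R_factors n f" "?r \<in> R_set (Suc n)" using Suc.prems(1) m by (simp_all add: R_factors_Suc)
    have prod: "R_prod (Suc n) f = R_prod n f \<circ> ?r" using m by (rule R_prod_Suc)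
    have len: "hat_length (Suc n) f = hat_length n f + (if ?r = id then 0 else 1)"
      using m by (rule hat_length_Suc)
    from m f(2) Suc.prems(2) show ?thesis
    proof (cases rule: R_set_times_T_gens)
      case 1
      let ?f' = "f(Suc n := ?r \<circ> t)"
      have "R_prod (Suc n) f \<circ> t = R_prod (Suc n) ?f'"
        using prod R_prod_upd[OF m] by (simp add: comp_assoc)
      moreover have "hat_length (Suc n) ?f' \<le> hat_length (Suc n) f + 1"
        using len hat_length_upd[OF m] by simp
      ultimately show ?thesis using R_factors_upd[OF f(1) 1] by blast
    next
      case (2 g r')
      from "2"(2) have "g \<in> T_gens n" by simp
      from Suc.IH[OF f(1) this] obtain f'' where f'':
        "R_factors n f''" "R_prod n f \<circ> g = R_prod n f''" "hat_length n f'' \<le> hat_length n f + 1"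
        by blast
      let ?f' = "f''(Suc n := r')"
      have "R_prod (Suc n) f \<circ> t = R_prod n f \<circ> g \<circ> r'"
        using prod 2(1) by (simp add: comp_assoc)
      also have "\<dots> = R_prod (Suc n) ?f'" using f''(2) R_prod_upd[OF m] by simp
      finally have "R_prod (Suc n) f \<circ> t = R_prod (Suc n) ?f'" .
      moreover have "hat_length (Suc n) ?f' \<le> hat_length (Suc n) f + 1"
        using len hat_length_upd[OF m] f''(3) 2(4) by auto
      ultimately show ?thesis using R_factors_upd[OF f''(1) 2(3)] by blast
    qed
  qed
qed

lemma list_prod_T_gens_R_factors:
  "set ts \<subseteq> T_gens n \<Longrightarrow> \<exists>f. R_factors n f \<and> list_prod ts = R_prod n f \<and> hat_length n f \<le> length ts"
proof (induction ts rule: rev_induct)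
  case Nil
  have "R_factors n (\<lambda>_. id)" by (simp add: R_factors_def R_set_def)
  moreover have "list_prod [] = R_prod n (\<lambda>_. id)"
    using list_prod_filter_id[of "map (\<lambda>_. id) [3..<n+1]"]
    by (simp add: list_prod_def filter_map comp_def del: upt_Suc)
  moreover have "hat_length n (\<lambda>_. id) = 0" by (simp add: hat_length_def)
  ultimately show ?case by (metis le_refl list.size(3))
next
  case (snoc t ts)
  then obtain f where f: "R_factors n f" "list_prod ts = R_prod n f" "hat_length n f \<le> length ts"
    by auto
  from snoc.prems have "t \<in> T_gens n" by simp
  from R_prod_times_T_gens[OF f(1) this] obtain f' where
    "R_factors n f'" "R_prod n f \<circ> t = R_prod n f'" "hat_length n f' \<le> hat_length n f + 1"
    by blast
  then show ?case using f by (intro exI[of _ f']) (auto simp: list_prod_snoc)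
qed

lemma bij_R_prod: "R_factors n f \<Longrightarrow> bij (R_prod n f)"
  unfolding R_factors_def by (intro bij_list_prod) (auto intro: R_set_bij)

lemma R_prod_fixpoint:
  assumes "R_factors n f" "n < x"
  shows "R_prod n f x = x"
proof (rule list_prod_fixpoint)
  fix t assume "t \<in> set (map f [3..<n+1])"
  then obtain i where "t = f i" "3 \<le> i" "i \<le> n" by auto
  then show "t x = x" using assms unfolding R_factors_def by (auto intro: R_set_fixpoint)
qed

lemma R_factors_unique:
  assumes "R_factors n f" "R_factors n g" "R_prod n f = R_prod n g" "3 \<le> i" "i \<le> n"
  shows "f i = g i"
  using assms
proof (induction n arbitrary: i)
  case 0
  then show ?case by simp
next
  case (Suc n)
  let ?m = "Suc n"
  have m: "3 \<le> ?m" using Suc.prems(4,5) by linarith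
  have f: "R_factors n f" "f ?m \<in> R_set ?m" and g: "R_factors n g" "g ?m \<in> R_set ?m"
    using Suc.prems(1,2) m by (simp_all add: R_factors_Suc)
  have eq: "R_prod n f \<circ> f ?m = R_prod n g \<circ> g ?m"
    using Suc.prems(3) unfolding R_prod_Suc[OF m, of f] R_prod_Suc[OF m, of g] .
  obtain x where x: "f ?m x = ?m" using bij_is_surj[OF R_set_bij[OF f(2)]] by (metis surjD)
  have "R_prod n g (g ?m x) = R_prod n f (f ?m x)"
    using fun_cong[OF eq, of x] by (simp only: comp_apply)
  also have "\<dots> = ?m" unfolding x by (rule R_prod_fixpoint[OF f(1)]) simp
  also have "\<dots> = R_prod n g ?m" by (rule R_prod_fixpoint[OF g(1), symmetric]) simp
  finally have "g ?m x = ?m" using bij_is_inj[OF bij_R_prod[OF g(1)]] by (rule injD[rotated])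
  then have top: "f ?m = g ?m"
    using R_set_determined_by_preimage[OF m f(2) x] R_set_determined_by_preimage[OF m g(2)] by (simp only:)
  have "R_prod n f = R_prod n g"
  proof
    fix y
    obtain z where z: "y = g ?m z" using bij_is_surj[OF R_set_bij[OF g(2)]] by (metis surjD)
    show "R_prod n f y = R_prod n g y" using fun_cong[OF eq, of z] unfolding comp_apply top z .
  qed
  note lower = Suc.IH[OF f(1) g(1) this Suc.prems(4)]
  show ?case
  proof (cases "i = ?m")
    case False
    then show ?thesis using lower Suc.prems(5) by simp
  qed (use top in simp)
qed

lemma R_prod_T_factorization:
  assumes "R_factors n f"
  shows "\<exists>ts. length ts = hat_length n f \<and> set ts \<subseteq> T_gens n \<and> R_prod n f = list_prod ts"
proof (intro exI conjI)
  let ?ts = "filter (\<lambda>t. t \<noteq> id) (map f [3..<n+1])"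
  show "R_prod n f = list_prod ?ts" by (simp only: list_prod_filter_id)
  have "length ?ts = length (filter (\<lambda>i. f i \<noteq> id) [3..<n+1])"
    by (simp add: filter_map comp_def)
  also have "\<dots> = card (set (filter (\<lambda>i. f i \<noteq> id) [3..<n+1]))"
    by (rule distinct_card[symmetric]) simp
  also have "set (filter (\<lambda>i. f i \<noteq> id) [3..<n+1]) = {i \<in> {3..n}. f i \<noteq> id}"
    by auto
  finally show "length ?ts = hat_length n f" unfolding hat_length_def .
  show "set ?ts \<subseteq> T_gens n"
  proof
    fix t assume "t \<in> set ?ts"
    then obtain i where i: "3 \<le> i" "i \<le> n" "t = f i" "f i \<noteq> id" by auto
    then obtain k where "t = transpose 1 2 \<circ> transpose k i" "1 \<le> k" "k < i"
      using assms unfolding R_factors_def R_set_def by auto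
    then show "t \<in> T_gens n" using i T_gens_ordered_memI[of k i n] by simp
  qed
qed

theorem theorem4p6:
  fixes n :: nat and v :: "nat \<Rightarrow> nat" and vf :: "nat \<Rightarrow> (nat \<Rightarrow> nat)"
  assumes "n \<ge> 3"
    and "v \<in> alt_group n"
    and "\<And>i. 3 \<le> i \<Longrightarrow> i \<le> n \<Longrightarrow> vf i \<in> R_set i"
    and "v = list_prod (map vf [3..<n+1])"
  shows "card {i \<in> {3..n}. vf i \<noteq> id} = T_length n v"
proof -
  have vf: "R_factors n vf" using assms(3) unfolding R_factors_def by blast
  let ?words = "\<lambda>k. \<exists>ts. length ts = k \<and> set ts \<subseteq> T_gens n \<and> v = list_prod ts"
  have "?words (hat_length n vf)" using R_prod_T_factorization[OF vf] unfolding assms(4) .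
  then have le: "T_length n v \<le> hat_length n vf"
    unfolding T_length_def by (rule Least_le)
  from LeastI[of ?words, OF \<open>?words (hat_length n vf)\<close>] obtain ts
    where ts: "length ts = T_length n v" "set ts \<subseteq> T_gens n" "v = list_prod ts"
    unfolding T_length_def by blast
  from list_prod_T_gens_R_factors[OF ts(2)] obtain g
    where g: "R_factors n g" "list_prod ts = R_prod n g" "hat_length n g \<le> length ts"
    by blast
  have "R_prod n vf = R_prod n g" using assms(4) ts(3) g(2) by simp
  then have "hat_length n vf = hat_length n g"
    using R_factors_unique[OF vf g(1)] by (intro hat_length_cong) auto
  then show ?thesis using le g(3) ts(1) unfolding hat_length_def by simp
qed

end
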